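(* Let $k$ be an even positive integer. Then $S_3(k;2)=S_{3,2}(k;2)=2k-3$.
   Context: Let $k,r$ be positive integers with $r\mid k$. A solution to $\mathcal{E}$ is a $k$-tuple $(x_1,\dots,x_k)$ of positive integers (not necessarily distinct) with $\sum_{i=1}^{k-1}x_i=x_k$; it lies in $[1,n]$ if all $x_i\in\{1,\dots,n\}$. Given a coloring $\chi$ of $[1,n]$ with colors in $\{0,1,\dots,r-1\}$ (viewed as integers), a solution is $r$-zero-sum if $\sum_{i=1}^k\chi(x_i)\equiv 0\pmod r$. $S_3(k;r)$ denotes the least positive integer $n$ such that every coloring $\chi:[1,n]\to\{0,1,\dots,r-1\}$ admits an $r$-zero-sum solution to $\mathcal{E}$ in $[1,n]$. $S_{3,2}(k;r)$ denotes the least positive integer $n$ such that every coloring $\chi:[1,n]\to\{0,1\}$ admits an $r$-zero-sum solution to $\mathcal{E}$ in $[1,n]$. *)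

theory Defs
  imports Main
begin

text \<open>A k-tuple is represented as a function x :: nat => nat, of which only the
values at indices 1..k matter.\<close>

definition is_solution :: "nat \<Rightarrow> (nat \<Rightarrow> nat) \<Rightarrow> bool" where
  "is_solution k x \<longleftrightarrow> (\<forall>i\<in>{1..k}. 0 < x i) \<and> (\<Sum>i=1..<k. x i) = x k"

definition in_interval :: "nat \<Rightarrow> nat \<Rightarrow> (nat \<Rightarrow> nat) \<Rightarrow> bool" where
  "in_interval n k x \<longleftrightarrow> (\<forall>i\<in>{1..k}. x i \<in> {1..n})"

definition zero_sum :: "nat \<Rightarrow> (nat \<Rightarrow> nat) \<Rightarrow> nat \<Rightarrow> (nat \<Rightarrow> nat) \<Rightarrow> bool" where
  "zero_sum r \<chi> k x \<longleftrightarrow> (\<Sum>i=1..k. \<chi> (x i)) mod r = 0"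

definition good :: "nat \<Rightarrow> nat \<Rightarrow> nat \<Rightarrow> nat \<Rightarrow> bool" where
  "good k r c n \<longleftrightarrow> (\<forall>\<chi>::nat \<Rightarrow> nat. (\<forall>i\<in>{1..n}. \<chi> i < c) \<longrightarrow>
      (\<exists>x. is_solution k x \<and> in_interval n k x \<and> zero_sum r \<chi> k x))"

definition S3 :: "nat \<Rightarrow> nat \<Rightarrow> nat" where
  "S3 k r = (LEAST n. 0 < n \<and> good k r r n)"

definition S32 :: "nat \<Rightarrow> nat \<Rightarrow> nat" where
  "S32 k r = (LEAST n. 0 < n \<and> good k r 2 n)"

end

theory Submission
  imports Defs
begin

text \<open>Lower bound: colour [1,k-2] by 1 and [k-1,2k-4] by 0. In a solution inside [1,2k-4]
the last entry is at least k-1 while every summand is at most k-2, so the colour sum is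
k-1, which is odd.
Upper bound: suppose \<chi> has no even-sum solution in [1,2k-3]. The solutions
(2, t, 1, ..., 1, t+k-1) and (t+1, 1, ..., 1, t+k-1) show that \<chi>(t+1) - \<chi>(t) is congruent
to the constant \<chi>(1) + \<chi>(2), so \<chi>(k-1) \<equiv> \<chi>(1) as k-2 is even; but the solution
(1, ..., 1, k-1) forces \<chi>(k-1) + (k-1)\<chi>(1) to be odd.\<close>

definition zero_sum_free :: "nat \<Rightarrow> (nat \<Rightarrow> nat) \<Rightarrow> nat \<Rightarrow> bool" where
  "zero_sum_free k \<chi> n \<longleftrightarrow>
     (\<forall>x. is_solution k x \<and> in_interval n k x \<longrightarrow> \<not> zero_sum 2 \<chi> k x)"

lemma good_2_iff: "good k 2 c n \<longleftrightarrow> (\<forall>\<chi>. (\<forall>i\<in>{1..n}. \<chi> i < c) \<longrightarrow> \<not> zero_sum_free k \<chi> n)"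
  unfolding good_def zero_sum_free_def by blast

lemma solution_last_ge:
  assumes "is_solution k x"
  shows "k - 1 \<le> x k"
proof -
  have "(\<Sum>i=1..<k. 1) \<le> (\<Sum>i=1..<k. x i)"
    using assms by (intro sum_mono) (auto simp: is_solution_def Suc_le_eq)
  with assms show ?thesis by (simp add: is_solution_def)
qed

lemma solution_summand_le:
  assumes sol: "is_solution k x" and i: "i \<in> {1..<k}"
  shows "x i + (k - 2) \<le> x k"
proof -
  have "card ({1..<k} - {i}) \<le> sum x ({1..<k} - {i})"
    using sum_mono[of "{1..<k} - {i}" "\<lambda>_. 1" x] sol by (auto simp: is_solution_def Suc_le_eq)
  moreover have "card ({1..<k} - {i}) = k - 2" using i by simp
  moreover have "x k = x i + sum x ({1..<k} - {i})"
    using sol i by (simp add: is_solution_def sum.remove)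
  ultimately show ?thesis by linarith
qed

lemma not_good_below:
  assumes "0 < k" "even k" "n \<le> 2 * k - 4"
  shows "\<not> good k 2 2 n"
proof -
  have "2 \<le> k" using assms(1,2) by presburger
  define \<chi> where "\<chi> i = (if i \<le> k - 2 then 1 else 0 :: nat)" for i
  have "zero_sum_free k \<chi> n"
    unfolding zero_sum_free_def
  proof (intro allI impI notI)
    fix x assume "is_solution k x \<and> in_interval n k x" and zs: "zero_sum 2 \<chi> k x"
    then have sol: "is_solution k x" and "x k \<le> n"
      using assms(1) by (auto simp: in_interval_def)
    with assms(3) have "x k \<le> 2 * k - 4" by simp
    then have "\<chi> (x i) = 1" if "i \<in> {1..<k}" for i
      using solution_summand_le[OF sol that] by (simp add: \<chi>_def)
    then have "(\<Sum>i=1..<k. \<chi> (x i)) = k - 1" by simp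
    moreover have "\<chi> (x k) = 0"
      using solution_last_ge[OF sol] \<open>2 \<le> k\<close> by (simp add: \<chi>_def)
    moreover have "{1..k} = insert k {1..<k}" using assms(1) by auto
    ultimately have "(\<Sum>i=1..k. \<chi> (x i)) = k - 1" by simp
    with zs assms show False by (simp add: zero_sum_def) presburger
  qed
  moreover have "\<forall>i\<in>{1..n}. \<chi> i < 2" by (simp add: \<chi>_def)
  ultimately show ?thesis by (auto simp: good_2_iff)
qed

definition padded_solution :: "nat \<Rightarrow> nat \<Rightarrow> nat \<Rightarrow> nat \<Rightarrow> nat" where
  "padded_solution k a b i =
     (if i = 1 then a else if i = 2 then b else if i = k then a + b + (k - 3) else 1)"

lemma sum_padded_solution:
  assumes "3 \<le> k"
  shows "(\<Sum>i=1..<k. f (padded_solution k a b i)) = f a + f b + (k - 3) * f 1"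
proof -
  have "{1..<k} = insert 1 (insert 2 {3..<k})" using assms by auto
  moreover have "(\<Sum>i=3..<k. f (padded_solution k a b i)) = (\<Sum>i=3..<k. f 1)"
    by (intro sum.cong) (auto simp: padded_solution_def)
  ultimately show ?thesis by (simp add: padded_solution_def)
qed

lemma padded_solution_is_solution:
  assumes "3 \<le> k" "0 < a" "0 < b"
  shows "is_solution k (padded_solution k a b)"
  using assms sum_padded_solution[of k id a b]
  by (auto simp: is_solution_def padded_solution_def)

lemma padded_solution_in_interval:
  assumes "3 \<le> k" "0 < a" "0 < b" "a + b + (k - 3) \<le> n"
  shows "in_interval n k (padded_solution k a b)"
  using assms by (auto simp: in_interval_def padded_solution_def)

lemma zero_sum_free_padded:
  assumes free: "zero_sum_free k \<chi> n"
    and "3 \<le> k" "0 < a" "0 < b" "a + b + (k - 3) \<le> n"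
  shows "odd (\<chi> a + \<chi> b + (k - 3) * \<chi> 1 + \<chi> (a + b + (k - 3)))"
proof -
  have "{1..k} = insert k {1..<k}" using assms by auto
  then have "(\<Sum>i=1..k. \<chi> (padded_solution k a b i))
      = \<chi> a + \<chi> b + (k - 3) * \<chi> 1 + \<chi> (a + b + (k - 3))"
    using sum_padded_solution[of k \<chi> a b] assms by (simp add: padded_solution_def)
  moreover have "\<not> zero_sum 2 \<chi> k (padded_solution k a b)"
    using free assms padded_solution_is_solution padded_solution_in_interval
    by (auto simp: zero_sum_free_def)
  ultimately show ?thesis by (metis zero_sum_def even_iff_mod_2_eq_zero)
qed

lemma zero_sum_free_increment:
  assumes free: "zero_sum_free k \<chi> (2 * k - 3)" and "3 \<le> k" "1 \<le> t" "t \<le> k - 2"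
  shows "even (\<chi> t + \<chi> (Suc t) + \<chi> 1 + \<chi> 2)"
proof -
  have "odd (\<chi> 2 + \<chi> t + (k - 3) * \<chi> 1 + \<chi> (2 + t + (k - 3)))"
    using zero_sum_free_padded[OF free, of 2 t] assms by simp
  moreover have "odd (\<chi> (Suc t) + \<chi> 1 + (k - 3) * \<chi> 1 + \<chi> (2 + t + (k - 3)))"
    using zero_sum_free_padded[OF free, of "Suc t" 1] assms by simp
  ultimately show ?thesis by simp argo
qed

lemma zero_sum_free_arithmetic:
  assumes free: "zero_sum_free k \<chi> (2 * k - 3)" and "3 \<le> k" "1 \<le> t" "t \<le> k - 1"
  shows "even (\<chi> t + \<chi> 1 + (t - 1) * (\<chi> 1 + \<chi> 2))"
  using assms(3,4)
proof (induction t rule: nat_induct_at_least)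
  case base
  then show ?case by simp
next
  case (Suc t)
  then have "even (\<chi> t + \<chi> 1 + (t - 1) * (\<chi> 1 + \<chi> 2))"
    and "even (\<chi> t + \<chi> (Suc t) + \<chi> 1 + \<chi> 2)"
    using zero_sum_free_increment[OF free assms(2)] by simp_all
  moreover have "(Suc t - 1) * (\<chi> 1 + \<chi> 2) = (t - 1) * (\<chi> 1 + \<chi> 2) + (\<chi> 1 + \<chi> 2)"
    using Suc.hyps by (cases t) auto
  ultimately show ?case by presburger
qed

lemma not_zero_sum_free:
  assumes "3 \<le> k" "even k"
  shows "\<not> zero_sum_free k \<chi> (2 * k - 3)"
proof
  assume free: "zero_sum_free k \<chi> (2 * k - 3)"
  have "even (\<chi> (k - 1) + \<chi> 1 + (k - 2) * (\<chi> 1 + \<chi> 2))"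
    using zero_sum_free_arithmetic[OF free, of "k - 1"] assms by (simp add: diff_diff_add)
  moreover have "odd (\<chi> 1 + \<chi> 1 + (k - 3) * \<chi> 1 + \<chi> (1 + 1 + (k - 3)))"
    using zero_sum_free_padded[OF free, of 1 1] assms by simp
  moreover have "1 + 1 + (k - 3) = k - 1" "even (k - 2)" "odd (k - 3)"
    using assms by presburger+
  ultimately show False by simp
qed

lemma good_2k_minus_3:
  assumes "0 < k" "even k"
  shows "good k 2 c (2 * k - 3)"
proof (cases "k = 2")
  case True
  have "is_solution k (\<lambda>_. 1)" "in_interval (2 * k - 3) k (\<lambda>_. 1)" "zero_sum 2 \<chi> k (\<lambda>_. 1)"
    for \<chi> using True by (simp_all add: is_solution_def in_interval_def zero_sum_def)
  then show ?thesis unfolding good_def by blast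
next
  case False
  with assms have "3 \<le> k" by presburger
  with assms show ?thesis by (simp add: good_2_iff not_zero_sum_free)
qed

theorem proposition3:
  fixes k :: nat
  assumes "0 < k" and "even k"
  shows "S3 k 2 = 2 * k - 3 \<and> S32 k 2 = 2 * k - 3"
proof -
  have "(LEAST n. 0 < n \<and> good k 2 2 n) = 2 * k - 3"
  proof (rule Least_equality)
    have "2 \<le> k" using assms by presburger
    then show "0 < 2 * k - 3 \<and> good k 2 2 (2 * k - 3)"
      using good_2k_minus_3[OF assms] by simp
  next
    fix n assume "0 < n \<and> good k 2 2 n"
    then show "2 * k - 3 \<le> n"
      using not_good_below[OF assms, of n] by linarith
  qed
  then show ?thesis by (simp add: S3_def S32_def)
qed

end
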